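(* Let $\lambda\in\mathbb{R}\setminus\{0\}$. For every $n\ge1$, $v_n=K_{0,\lambda}u_n$ is the restriction to $z=-iy$, $y\ge0$, of an element of $\mathbb{B}_0$.
   Context: $\mathbb{B}$ is the Bargmann space of entire functions $\varphi$ with $\frac1\pi\int_{\mathbb{C}}|\varphi|^2e^{-|z|^2}dxdy<\infty$; $\mathbb{B}_0=\{\varphi\in\mathbb{B}:\varphi(0)=0\}$ with orthonormal basis $\tilde e_k(z)=(iz)^k/\sqrt{k!}$, $k\ge1$; $u_k(y)=\tilde e_k(-iy)=y^k/\sqrt{k!}$. $K_{0,\lambda}\psi(y)=\frac1\lambda\int_0^ye^{t^2/2}\big(\int_t^\infty s^{-1}e^{-s^2/2}\psi(s)\,ds\big)dt$. *)

theory Defs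
  imports "HOL-Analysis.Analysis"
begin

text \<open>Bargmann space: entire functions with finite Gaussian-weighted L2 norm
  (the normalising factor 1/pi does not affect membership).\<close>
definition bargmann :: "(complex \<Rightarrow> complex) set" where
  "bargmann = {\<phi>. \<phi> holomorphic_on UNIV \<and>
     integrable lborel (\<lambda>z. (cmod (\<phi> z))\<^sup>2 * exp (- (cmod z)\<^sup>2))}"

definition bargmann0 :: "(complex \<Rightarrow> complex) set" where
  "bargmann0 = {\<phi> \<in> bargmann. \<phi> 0 = 0}"

definition u :: "nat \<Rightarrow> real \<Rightarrow> real" where
  "u k y = y ^ k / sqrt (fact k)"

definition K0 :: "real \<Rightarrow> (real \<Rightarrow> real) \<Rightarrow> real \<Rightarrow> real" where
  "K0 lam \<psi> y = (1 / lam) *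
     (LBINT t=0..y. exp (t\<^sup>2 / 2) *
        (LBINT s:{t..}. inverse s * exp (- (s\<^sup>2) / 2) * \<psi> s))"

end

theory Submission
  imports Defs "HOL-Probability.Distributions" "HOL-Real_Asymp.Real_Asymp"
begin

text \<open>
  Let G(t) = \<integral>[t,\<infinity>) s^(n-1) exp(-s^2/2) ds / sqrt(n!) be the inner integral of K0 lam (u n).
  Then H(t) = exp(t^2/2) G(t) solves H' = t H - t^(n-1) / sqrt(n!), so H is an entire power
  series \<Sum> h_k t^k with (k + 2) h_(k+2) = h_k for k \<ge> n - 1, and K0 lam (u n) = P / lam
  where P' = H, P(0) = 0. The recursion makes h_k^2 k! / (k + 1) decay like k^(-3/2), hence the
  coefficients p_k of P satisfy \<Sum> p_k^2 k! < \<infinity>. Since the monomials are orthogonal for the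
  Gaussian weight, \<integral> z^j (cnj z)^k exp(-|z|^2) = \<delta>_jk k! \<integral> exp(-|z|^2) (integration by parts),
  such a power series lies in the Bargmann space (Fatou's lemma on the partial sums), and
  \<phi>(z) = P(i z) / lam is the required function.
\<close>

section \<open>Gaussian moments in the plane\<close>

lemma borel_measurable_pair_lborel_continuous:
  fixes g :: "real \<times> real \<Rightarrow> 'b::topological_space"
  shows "continuous_on UNIV g \<Longrightarrow> g \<in> borel_measurable (lborel \<Otimes>\<^sub>M lborel)"
  by (simp add: lborel_prod borel_measurable_continuous_onI)

lemma distr_lborel_pair_Complex:
  "distr (lborel \<Otimes>\<^sub>M lborel) borel (\<lambda>p. Complex (fst p) (snd p)) = (lborel :: complex measure)"
proof (rule lborel_eqI[symmetric])
  fix l u :: complex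
  assume le: "\<And>b. b \<in> Basis \<Longrightarrow> l \<bullet> b \<le> u \<bullet> b"
  have m: "(\<lambda>p. Complex (fst p) (snd p)) \<in> lborel \<Otimes>\<^sub>M lborel \<rightarrow>\<^sub>M borel"
    by (intro borel_measurable_pair_lborel_continuous continuous_intros)
  have pre: "(\<lambda>p. Complex (fst p) (snd p)) -` box l u \<inter> space (lborel \<Otimes>\<^sub>M lborel)
      = {Re l<..<Re u} \<times> {Im l<..<Im u}"
    by (auto simp: box_def Basis_complex_def space_pair_measure)
  have "Re l \<le> Re u" "Im l \<le> Im u"
    using le[of 1] le[of "\<i>"] by (auto simp: Basis_complex_def)
  then show "emeasure (distr (lborel \<Otimes>\<^sub>M lborel) borel (\<lambda>p. Complex (fst p) (snd p))) (box l u)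
      = (\<Prod>b\<in>Basis. (u - l) \<bullet> b)"
    by (simp add: emeasure_distr[OF m] pre lborel.emeasure_pair_measure_Times Basis_complex_def ennreal_mult)
qed simp

lemma integral_lborel_derivative_eq_0:
  fixes F f :: "real \<Rightarrow> 'a::euclidean_space"
  assumes "\<And>x. (F has_vector_derivative f x) (at x)" and "continuous_on UNIV f"
    and "integrable lborel f" and "(F \<longlongrightarrow> 0) at_top" and "(F \<longlongrightarrow> 0) at_bot"
  shows "integral\<^sup>L lborel f = 0"
proof -
  have "(LBINT x=-\<infinity>..\<infinity>. f x) = 0 - 0"
    using assms
    by (intro interval_integral_FTC_integrable)
       (auto simp: ereal_tendsto_simps1 set_integrable_def continuous_on_eq_continuous_at)
  then show ?thesis
    by (simp add: interval_lebesgue_integral_def set_lebesgue_integral_def)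
qed

lemma power_div_fact_le_exp:
  fixes x :: real assumes "0 \<le> x" shows "x ^ n / fact n \<le> exp x"
proof -
  have "x ^ n / fact n \<le> (\<Sum>k. x ^ k /\<^sub>R fact k)"
    using sum_le_suminf[OF summable_exp_generic[of x], of "{n}"] assms
    by (auto simp: divide_inverse mult.commute)
  then show ?thesis by (simp add: exp_def)
qed

lemma power_mult_exp_neg_square_le:
  fixes r :: real assumes "0 \<le> r"
  shows "r ^ p * exp (- r\<^sup>2) \<le> (1 + 2 ^ p * fact p) * exp (- r\<^sup>2 / 2)"
proof -
  have "r ^ p \<le> 1 + r ^ (2 * p)"
  proof (cases "r \<le> 1")
    case True
    then show ?thesis using power_le_one[OF assms True, of p] zero_le_power[OF assms, of "2 * p"] by linarith
  next
    case False
    then have "r ^ p \<le> r ^ (2 * p)" by (intro power_increasing) auto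
    then show ?thesis by simp
  qed
  also have "r ^ (2 * p) = 2 ^ p * (r\<^sup>2 / 2) ^ p"
    by (simp add: power_mult power_divide)
  also have "(r\<^sup>2 / 2) ^ p \<le> fact p * exp (r\<^sup>2 / 2)"
    using power_div_fact_le_exp[of "r\<^sup>2 / 2" p] by (simp add: field_simps)
  finally have "r ^ p * exp (- r\<^sup>2) \<le> (1 + 2 ^ p * (fact p * exp (r\<^sup>2 / 2))) * exp (- r\<^sup>2)"
    by (intro mult_right_mono) auto
  also have "\<dots> = exp (- r\<^sup>2) + 2 ^ p * fact p * exp (- r\<^sup>2 / 2)"
    by (simp add: algebra_simps flip: exp_add)
  also have "\<dots> \<le> (1 + 2 ^ p * fact p) * exp (- r\<^sup>2 / 2)"
    by (simp add: algebra_simps)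
  finally show ?thesis .
qed

definition gauss :: "real \<Rightarrow> real" where
  "gauss x = exp (- x\<^sup>2 / 2)"

lemma gauss_pos: "0 < gauss x"
  by (simp add: gauss_def)

lemma gauss_tendsto_0: "(gauss \<longlongrightarrow> 0) at_top" "(gauss \<longlongrightarrow> 0) at_bot"
  unfolding gauss_def by real_asymp+

lemma integrable_gauss: "integrable lborel gauss"
proof -
  have "integrable lborel (\<lambda>x. sqrt (2 * pi) * std_normal_density x)"
    by (intro integrable_mult_right) simp
  moreover have "(\<lambda>x. sqrt (2 * pi) * std_normal_density x) = gauss"
    by (auto simp: std_normal_density_def gauss_def fun_eq_iff)
  ultimately show ?thesis by simp
qed

lemma integrable_gauss_dominated:
  fixes g :: "real \<Rightarrow> 'b::{banach,second_countable_topology}"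
  assumes "continuous_on UNIV g" and "\<And>x. norm (g x) \<le> C * gauss x"
  shows "integrable lborel g"
proof (rule Bochner_Integration.integrable_bound)
  show "integrable lborel (\<lambda>x. C * gauss x)"
    using integrable_gauss by (rule integrable_mult_right)
  show "AE x in lborel. norm (g x) \<le> norm (C * gauss x)"
    using assms(2) by (auto intro!: AE_I2 order_trans[OF _ abs_ge_self])
qed (use assms(1) in \<open>simp add: borel_measurable_continuous_onI\<close>)

lemma integrable_pair_gauss_dominated:
  fixes g :: "real \<times> real \<Rightarrow> 'b::{banach,second_countable_topology}"
  assumes "continuous_on UNIV g" and "\<And>x y. norm (g (x, y)) \<le> C * (gauss x * gauss y)"
  shows "integrable (lborel \<Otimes>\<^sub>M lborel) g"
proof (rule Bochner_Integration.integrable_bound)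
  have "integrable (lborel \<Otimes>\<^sub>M lborel) (\<lambda>p. gauss (fst p) * gauss (snd p))"
  proof (rule lborel_pair.Fubini_integrable)
    show "(\<lambda>p. gauss (fst p) * gauss (snd p)) \<in> borel_measurable (lborel \<Otimes>\<^sub>M lborel)"
      by (simp add: gauss_def)
    show "integrable lborel (\<lambda>x. \<integral>y. norm (gauss (fst (x, y)) * gauss (snd (x, y))) \<partial>lborel)"
      using integrable_gauss by (simp add: abs_mult abs_of_pos gauss_pos integrable_mult_left)
  qed (use integrable_gauss in \<open>simp add: integrable_mult_right\<close>)
  then show "integrable (lborel \<Otimes>\<^sub>M lborel) (\<lambda>p. C * (gauss (fst p) * gauss (snd p)))"
    by (rule integrable_mult_right)
  show "g \<in> borel_measurable (lborel \<Otimes>\<^sub>M lborel)"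
    using assms(1) by (rule borel_measurable_pair_lborel_continuous)
  show "AE p in lborel \<Otimes>\<^sub>M lborel. norm (g p) \<le> norm (C * (gauss (fst p) * gauss (snd p)))"
    using assms(2) by (auto intro!: AE_I2 order_trans[OF _ abs_ge_self])
qed

definition gauss_monomial :: "nat \<Rightarrow> nat \<Rightarrow> complex \<Rightarrow> complex" where
  "gauss_monomial j k z = z ^ j * cnj z ^ k * exp (- of_real ((cmod z)\<^sup>2))"

lemma continuous_on_gauss_monomial [continuous_intros]:
  "continuous_on S f \<Longrightarrow> continuous_on S (\<lambda>x. gauss_monomial j k (f x))"
  unfolding gauss_monomial_def by (intro continuous_intros)

lemma gauss_monomial_Complex:
  "gauss_monomial j k (Complex x y) = (of_real x + \<i> * of_real y) ^ j * (of_real x - \<i> * of_real y) ^ k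
     * exp (- ((of_real x)\<^sup>2 + (of_real y)\<^sup>2))"
proof -
  have "(cmod (Complex x y))\<^sup>2 = x\<^sup>2 + y\<^sup>2" by (simp add: cmod_power2)
  then show ?thesis by (simp add: gauss_monomial_def Complex_eq)
qed

lemma norm_gauss_monomial_le:
  "cmod (gauss_monomial j k (Complex x y)) \<le> (1 + 2 ^ (j + k) * fact (j + k)) * (gauss x * gauss y)"
proof -
  have "cmod (gauss_monomial j k (Complex x y)) = cmod (Complex x y) ^ (j + k) * exp (- (cmod (Complex x y))\<^sup>2)"
    by (simp add: gauss_monomial_def norm_mult norm_power power_add flip: exp_of_real)
  also have "\<dots> \<le> (1 + 2 ^ (j + k) * fact (j + k)) * exp (- (cmod (Complex x y))\<^sup>2 / 2)"
    by (rule power_mult_exp_neg_square_le) simp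
  also have "exp (- (cmod (Complex x y))\<^sup>2 / 2) = gauss x * gauss y"
    by (simp add: gauss_def complex_norm add_divide_distrib flip: exp_add)
  finally show ?thesis .
qed

lemma gauss_monomial_tendsto_0:
  "((\<lambda>x. gauss_monomial j k (Complex x y)) \<longlongrightarrow> 0) at_top"
  "((\<lambda>x. gauss_monomial j k (Complex x y)) \<longlongrightarrow> 0) at_bot"
  "((\<lambda>y. gauss_monomial j k (Complex x y)) \<longlongrightarrow> 0) at_top"
  "((\<lambda>y. gauss_monomial j k (Complex x y)) \<longlongrightarrow> 0) at_bot"
proof -
  define C where "C = 1 + 2 ^ (j + k) * (fact (j + k) :: real)"
  have Re: "((\<lambda>x. gauss_monomial j k (Complex x y)) \<longlongrightarrow> 0) F" if "(gauss \<longlongrightarrow> 0) F" for F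
  proof (rule Lim_null_comparison[OF always_eventually])
    show "\<forall>x. norm (gauss_monomial j k (Complex x y)) \<le> C * gauss y * gauss x"
      using norm_gauss_monomial_le[of j k _ y] by (simp add: C_def mult_ac)
  qed (rule tendsto_mult_right_zero[OF that])
  have Im: "((\<lambda>y. gauss_monomial j k (Complex x y)) \<longlongrightarrow> 0) F" if "(gauss \<longlongrightarrow> 0) F" for F
  proof (rule Lim_null_comparison[OF always_eventually])
    show "\<forall>y. norm (gauss_monomial j k (Complex x y)) \<le> C * gauss x * gauss y"
      using norm_gauss_monomial_le[of j k x] by (simp add: C_def mult_ac)
  qed (rule tendsto_mult_right_zero[OF that])
  show "((\<lambda>x. gauss_monomial j k (Complex x y)) \<longlongrightarrow> 0) at_top"
    "((\<lambda>x. gauss_monomial j k (Complex x y)) \<longlongrightarrow> 0) at_bot"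
    "((\<lambda>y. gauss_monomial j k (Complex x y)) \<longlongrightarrow> 0) at_top"
    "((\<lambda>y. gauss_monomial j k (Complex x y)) \<longlongrightarrow> 0) at_bot"
    using Re Im gauss_tendsto_0 by blast+
qed

lemma gauss_monomial_has_derivative_Re:
  "((\<lambda>x. gauss_monomial j k (Complex x y)) has_vector_derivative
     of_nat j * gauss_monomial (j - 1) k (Complex x y) + of_nat k * gauss_monomial j (k - 1) (Complex x y)
     - gauss_monomial (Suc j) k (Complex x y) - gauss_monomial j (Suc k) (Complex x y)) (at x)"
proof -
  define h where "h w = (w + \<i> * of_real y) ^ j * (w - \<i> * of_real y) ^ k * exp (- (w\<^sup>2 + (of_real y)\<^sup>2))"
    for w :: complex
  have "(h has_field_derivative
     of_nat j * (w + \<i> * of_real y) ^ (j - 1) * (w - \<i> * of_real y) ^ k * exp (- (w\<^sup>2 + (of_real y)\<^sup>2))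
     + of_nat k * (w + \<i> * of_real y) ^ j * (w - \<i> * of_real y) ^ (k - 1) * exp (- (w\<^sup>2 + (of_real y)\<^sup>2))
     - (w + \<i> * of_real y) ^ Suc j * (w - \<i> * of_real y) ^ k * exp (- (w\<^sup>2 + (of_real y)\<^sup>2))
     - (w + \<i> * of_real y) ^ j * (w - \<i> * of_real y) ^ Suc k * exp (- (w\<^sup>2 + (of_real y)\<^sup>2))) (at w)" for w
    unfolding h_def
    by (rule derivative_eq_intros refl | simp)+ (simp add: algebra_simps power2_eq_square)
  from has_vector_derivative_real_field[OF this[of "of_real x"]]
  show ?thesis by (simp add: h_def gauss_monomial_Complex mult.assoc)
qed

lemma gauss_monomial_has_derivative_Im:
  "((\<lambda>y. gauss_monomial j k (Complex x y)) has_vector_derivative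
     \<i> * (of_nat j * gauss_monomial (j - 1) k (Complex x y) - of_nat k * gauss_monomial j (k - 1) (Complex x y)
     + gauss_monomial (Suc j) k (Complex x y) - gauss_monomial j (Suc k) (Complex x y))) (at y)"
proof -
  define h where "h w = (of_real x + \<i> * w) ^ j * (of_real x - \<i> * w) ^ k * exp (- ((of_real x)\<^sup>2 + w\<^sup>2))"
    for w :: complex
  have "(h has_field_derivative
     \<i> * (of_nat j * (of_real x + \<i> * w) ^ (j - 1) * (of_real x - \<i> * w) ^ k * exp (- ((of_real x)\<^sup>2 + w\<^sup>2))
     - of_nat k * (of_real x + \<i> * w) ^ j * (of_real x - \<i> * w) ^ (k - 1) * exp (- ((of_real x)\<^sup>2 + w\<^sup>2))
     + (of_real x + \<i> * w) ^ Suc j * (of_real x - \<i> * w) ^ k * exp (- ((of_real x)\<^sup>2 + w\<^sup>2))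
     - (of_real x + \<i> * w) ^ j * (of_real x - \<i> * w) ^ Suc k * exp (- ((of_real x)\<^sup>2 + w\<^sup>2)))) (at w)" for w
    unfolding h_def
    by (rule derivative_eq_intros refl | simp)+ (simp add: algebra_simps power2_eq_square)
  from has_vector_derivative_real_field[OF this[of "of_real y"]]
  show ?thesis by (simp add: h_def gauss_monomial_Complex mult.assoc)
qed

lemma integrable_gauss_monomial_Re: "integrable lborel (\<lambda>x. gauss_monomial j k (Complex x y))"
  using norm_gauss_monomial_le[of j k _ y]
  by (intro integrable_gauss_dominated[where C = "(1 + 2 ^ (j + k) * fact (j + k)) * gauss y"])
     (auto intro!: continuous_intros simp: mult_ac)

lemma integrable_gauss_monomial_Im: "integrable lborel (\<lambda>y. gauss_monomial j k (Complex x y))"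
  using norm_gauss_monomial_le[of j k x]
  by (intro integrable_gauss_dominated[where C = "(1 + 2 ^ (j + k) * fact (j + k)) * gauss x"])
     (auto intro!: continuous_intros simp: mult_ac)

lemma integrable_gauss_monomial:
  "integrable (lborel \<Otimes>\<^sub>M lborel) (\<lambda>p. gauss_monomial j k (Complex (fst p) (snd p)))"
  using norm_gauss_monomial_le[of j k]
  by (intro integrable_pair_gauss_dominated) (auto intro!: continuous_intros)

definition gauss_moment :: "nat \<Rightarrow> nat \<Rightarrow> complex" where
  "gauss_moment j k = (\<integral>p. gauss_monomial j k (Complex (fst p) (snd p)) \<partial>(lborel \<Otimes>\<^sub>M lborel))"

lemmas gauss_monomial_integral_simps =
  Bochner_Integration.integral_add Bochner_Integration.integral_diff
  Bochner_Integration.integrable_add Bochner_Integration.integrable_diff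
  integrable_mult_right integrable_gauss_monomial integrable_gauss_monomial_Re integrable_gauss_monomial_Im

text \<open>Integration by parts: the x- and y-derivatives of a Gaussian monomial integrate to zero
  along every line, hence over the plane.\<close>

lemma gauss_moment_relation_Re:
  "of_nat j * gauss_moment (j - 1) k + of_nat k * gauss_moment j (k - 1)
     - gauss_moment (Suc j) k - gauss_moment j (Suc k) = 0"
proof -
  define D where "D x y = of_nat j * gauss_monomial (j - 1) k (Complex x y)
     + of_nat k * gauss_monomial j (k - 1) (Complex x y)
     - gauss_monomial (Suc j) k (Complex x y) - gauss_monomial j (Suc k) (Complex x y)" for x y
  have line: "(\<integral>x. D x y \<partial>lborel) = 0" for y
    unfolding D_def
    by (rule integral_lborel_derivative_eq_0[OF gauss_monomial_has_derivative_Re])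
       (auto intro!: continuous_intros gauss_monomial_tendsto_0 simp: gauss_monomial_integral_simps)
  have "(\<integral>p. D (fst p) (snd p) \<partial>(lborel \<Otimes>\<^sub>M lborel)) = 0"
    using lborel_pair.integral_snd[of D] line
    by (simp add: D_def split_beta' gauss_monomial_integral_simps)
  then show ?thesis
    by (simp add: D_def gauss_moment_def gauss_monomial_integral_simps)
qed

lemma gauss_moment_relation_Im:
  "of_nat j * gauss_moment (j - 1) k - of_nat k * gauss_moment j (k - 1)
     + gauss_moment (Suc j) k - gauss_moment j (Suc k) = 0"
proof -
  define D where "D x y = \<i> * (of_nat j * gauss_monomial (j - 1) k (Complex x y)
     - of_nat k * gauss_monomial j (k - 1) (Complex x y)
     + gauss_monomial (Suc j) k (Complex x y) - gauss_monomial j (Suc k) (Complex x y))" for x y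
  have line: "(\<integral>y. D x y \<partial>lborel) = 0" for x
    unfolding D_def
    by (rule integral_lborel_derivative_eq_0[OF gauss_monomial_has_derivative_Im])
       (auto intro!: continuous_intros gauss_monomial_tendsto_0 simp: gauss_monomial_integral_simps)
  have "(\<integral>p. D (fst p) (snd p) \<partial>(lborel \<Otimes>\<^sub>M lborel)) = 0"
    using lborel_pair.integral_fst'[of "\<lambda>p. D (fst p) (snd p)"] line
    by (simp add: D_def gauss_monomial_integral_simps)
  then show ?thesis
    by (simp add: D_def gauss_moment_def gauss_monomial_integral_simps)
qed

lemma gauss_moment_Suc:
  "gauss_moment (Suc j) k = of_nat k * gauss_moment j (k - 1)"
  "gauss_moment j (Suc k) = of_nat j * gauss_moment (j - 1) k"
proof -
  have "a + b - c - e = 0 \<Longrightarrow> a - b + c - e = 0 \<Longrightarrow> c = b \<and> e = a" for a b c e :: complex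
    by algebra
  from this[OF gauss_moment_relation_Re gauss_moment_relation_Im]
  show "gauss_moment (Suc j) k = of_nat k * gauss_moment j (k - 1)"
    "gauss_moment j (Suc k) = of_nat j * gauss_moment (j - 1) k" by auto
qed

lemma gauss_moment_eq: "gauss_moment j k = (if j = k then fact k * gauss_moment 0 0 else 0)"
proof (induction j arbitrary: k)
  case 0
  then show ?case by (cases k) (simp_all add: gauss_moment_Suc)
next
  case (Suc j)
  then show ?case by (cases k) (simp_all add: gauss_moment_Suc algebra_simps)
qed

section \<open>Power series in the Bargmann space\<close>

lemma norm_poly_sq_gauss_eq:
  "complex_of_real ((cmod (\<Sum>k<N. a k * z ^ k))\<^sup>2 * exp (- (cmod z)\<^sup>2))
     = (\<Sum>j<N. \<Sum>k<N. a j * cnj (a k) * gauss_monomial j k z)"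
proof -
  have "complex_of_real ((cmod (\<Sum>k<N. a k * z ^ k))\<^sup>2 * exp (- (cmod z)\<^sup>2))
      = (\<Sum>k<N. a k * z ^ k) * cnj (\<Sum>k<N. a k * z ^ k) * exp (- of_real ((cmod z)\<^sup>2))"
    by (simp only: of_real_mult complex_norm_square[of "\<Sum>k<N. a k * z ^ k"] of_real_exp of_real_minus)
  also have "\<dots> = (\<Sum>j<N. \<Sum>k<N. a j * cnj (a k) * gauss_monomial j k z)"
    unfolding cnj_sum complex_cnj_mult complex_cnj_power sum_product sum_distrib_right gauss_monomial_def
    by (intro sum.cong refl) (simp add: sum_distrib_left mult_ac)
  finally show ?thesis .
qed

lemma integral_norm_poly_sq_gauss:
  "(\<integral>p. (cmod (\<Sum>k<N. a k * Complex (fst p) (snd p) ^ k))\<^sup>2 * exp (- (cmod (Complex (fst p) (snd p)))\<^sup>2)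
      \<partial>(lborel \<Otimes>\<^sub>M lborel))
   = (\<Sum>k<N. (cmod (a k))\<^sup>2 * fact k) * Re (gauss_moment 0 0)" (is "?I = ?S * _")
proof -
  have "complex_of_real (\<integral>p. (cmod (\<Sum>k<N. a k * Complex (fst p) (snd p) ^ k))\<^sup>2
          * exp (- (cmod (Complex (fst p) (snd p)))\<^sup>2) \<partial>(lborel \<Otimes>\<^sub>M lborel))
      = (\<integral>p. (\<Sum>j<N. \<Sum>k<N. a j * cnj (a k) * gauss_monomial j k (Complex (fst p) (snd p)))
          \<partial>(lborel \<Otimes>\<^sub>M lborel))"
    unfolding integral_complex_of_real[symmetric] norm_poly_sq_gauss_eq ..
  also have "\<dots> = (\<Sum>j<N. \<Sum>k<N. a j * cnj (a k) * gauss_moment j k)"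
    by (simp add: gauss_moment_def integrable_gauss_monomial)
  also have "\<dots> = (\<Sum>k<N. complex_of_real ((cmod (a k))\<^sup>2 * fact k)) * gauss_moment 0 0"
    by (subst gauss_moment_eq)
       (simp add: if_distrib sum.delta sum_distrib_left sum_distrib_right complex_norm_square mult_ac
         del: of_real_power cong: if_cong)
  finally have "complex_of_real ?I = complex_of_real ?S * gauss_moment 0 0"
    by simp
  from arg_cong[where f = Re, OF this] show ?thesis
    by simp
qed

lemma nn_integral_norm_poly_sq_gauss_le:
  assumes summable: "summable (\<lambda>k. (cmod (a k))\<^sup>2 * fact k)"
  shows "(\<integral>\<^sup>+p. (cmod (\<Sum>k<N. a k * Complex (fst p) (snd p) ^ k))\<^sup>2
            * exp (- (cmod (Complex (fst p) (snd p)))\<^sup>2) \<partial>(lborel \<Otimes>\<^sub>M lborel))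
         \<le> \<bar>Re (gauss_moment 0 0)\<bar> * (\<Sum>k. (cmod (a k))\<^sup>2 * fact k)"
proof -
  define s where "s z = (cmod (\<Sum>k<N. a k * z ^ k))\<^sup>2 * exp (- (cmod z)\<^sup>2)" for z
  have "integrable (lborel \<Otimes>\<^sub>M lborel) (\<lambda>p. complex_of_real (s (Complex (fst p) (snd p))))"
    by (simp only: s_def norm_poly_sq_gauss_eq) (simp add: integrable_gauss_monomial)
  from integrable_Re[OF this]
  have "(\<integral>\<^sup>+p. s (Complex (fst p) (snd p)) \<partial>(lborel \<Otimes>\<^sub>M lborel))
      = (\<Sum>k<N. (cmod (a k))\<^sup>2 * fact k) * Re (gauss_moment 0 0)"
    using integral_norm_poly_sq_gauss[where a = a and N = N] by (subst nn_integral_eq_integral) (auto simp: s_def)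
  also have "\<dots> \<le> (\<Sum>k<N. (cmod (a k))\<^sup>2 * fact k) * \<bar>Re (gauss_moment 0 0)\<bar>"
    by (intro ennreal_leI mult_left_mono sum_nonneg) auto
  also have "\<dots> \<le> \<bar>Re (gauss_moment 0 0)\<bar> * (\<Sum>k. (cmod (a k))\<^sup>2 * fact k)"
    using sum_le_suminf[OF summable, of "{..<N}"]
    by (intro ennreal_leI) (simp add: mult.commute mult_left_mono)
  finally show ?thesis
    by (simp add: s_def)
qed

lemma summable_power_series_if_summable_norm_sq_fact:
  fixes a :: "nat \<Rightarrow> 'a::{real_normed_field,banach}"
  assumes "summable (\<lambda>k. (norm (a k))\<^sup>2 * fact k)"
  shows "summable (\<lambda>k. a k * z ^ k)"
proof (rule summable_norm_cancel, rule summable_comparison_test')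
  have "summable (\<lambda>k. (norm z)\<^sup>2 ^ k / fact k)"
    using summable_exp_generic[of "(norm z)\<^sup>2"] by (simp add: divide_inverse mult.commute)
  with assms show "summable (\<lambda>k. ((norm (a k))\<^sup>2 * fact k + (norm z)\<^sup>2 ^ k / fact k) / 2)"
    by (intro summable_divide summable_add)
  show "norm (norm (a k * z ^ k)) \<le> ((norm (a k))\<^sup>2 * fact k + (norm z)\<^sup>2 ^ k / fact k) / 2" for k
  proof -
    define s :: real where "s = sqrt (fact k)"
    define A Z where "A = norm (a k)" and "Z = norm z ^ k"
    have s: "0 < s" "fact k = s\<^sup>2" by (simp_all add: s_def)
    have "(norm z)\<^sup>2 ^ k = Z\<^sup>2" by (simp add: Z_def flip: power_mult) (simp add: mult.commute)
    moreover have "(A * s - Z / s)\<^sup>2 = A\<^sup>2 * s\<^sup>2 - 2 * (A * Z) + Z\<^sup>2 / s\<^sup>2"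
      using s by (simp add: power2_eq_square field_simps)
    moreover have "0 \<le> (A * s - Z / s)\<^sup>2" by simp
    ultimately show ?thesis
      unfolding s(2) by (simp add: A_def Z_def norm_mult norm_power)
  qed
qed

lemma integrable_norm_power_series_sq_gauss:
  fixes a :: "nat \<Rightarrow> complex"
  assumes summable: "summable (\<lambda>k. (cmod (a k))\<^sup>2 * fact k)"
  defines "f \<equiv> \<lambda>z. (cmod (\<Sum>k. a k * z ^ k))\<^sup>2 * exp (- (cmod z)\<^sup>2)"
  shows "integrable (lborel \<Otimes>\<^sub>M lborel) (\<lambda>p. f (Complex (fst p) (snd p)))"
proof -
  define s where "s N z = (cmod (\<Sum>k<N. a k * z ^ k))\<^sup>2 * exp (- (cmod z)\<^sup>2)" for N z
  define c where "c = \<bar>Re (gauss_moment 0 0)\<bar> * (\<Sum>k. (cmod (a k))\<^sup>2 * fact k)"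
  have conv: "summable (\<lambda>k. a k * z ^ k)" for z
    by (rule summable_power_series_if_summable_norm_sq_fact[OF summable])
  have "isCont (\<lambda>z. \<Sum>k. a k * z ^ k) z" for z
    by (rule DERIV_isCont[OF termdiffs_strong_converges_everywhere[OF conv]])
  then have cont: "continuous_on UNIV f"
    unfolding f_def by (intro continuous_at_imp_continuous_on ballI continuous_intros) auto
  have "(\<lambda>p. f (Complex (fst p) (snd p))) \<in> borel_measurable (lborel \<Otimes>\<^sub>M lborel)"
    by (intro borel_measurable_pair_lborel_continuous continuous_on_compose2[OF cont _ subset_UNIV]
          continuous_intros)
  moreover have "(\<integral>\<^sup>+p. f (Complex (fst p) (snd p)) \<partial>(lborel \<Otimes>\<^sub>M lborel)) \<le> c"
  proof -
    have partial_bound: "(\<integral>\<^sup>+p. s N (Complex (fst p) (snd p)) \<partial>(lborel \<Otimes>\<^sub>M lborel)) \<le> c" for N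
      unfolding s_def c_def by (rule nn_integral_norm_poly_sq_gauss_le[OF summable])
    have "(\<lambda>N. s N z) \<longlonglongrightarrow> f z" for z
      unfolding s_def f_def by (intro tendsto_intros summable_LIMSEQ[OF conv])
    then have "(\<integral>\<^sup>+p. f (Complex (fst p) (snd p)) \<partial>(lborel \<Otimes>\<^sub>M lborel))
        = (\<integral>\<^sup>+p. liminf (\<lambda>N. ennreal (s N (Complex (fst p) (snd p)))) \<partial>(lborel \<Otimes>\<^sub>M lborel))"
      by (intro nn_integral_cong lim_imp_Liminf[symmetric] tendsto_ennrealI) auto
    also have "\<dots> \<le> liminf (\<lambda>N. \<integral>\<^sup>+p. s N (Complex (fst p) (snd p)) \<partial>(lborel \<Otimes>\<^sub>M lborel))"
      unfolding s_def
      by (intro nn_integral_liminf measurable_compose[OF borel_measurable_pair_lborel_continuous measurable_ennreal]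
            continuous_intros)
    also have "\<dots> \<le> c"
      by (rule Liminf_le) (simp_all add: always_eventually partial_bound)
    finally show ?thesis .
  qed
  ultimately show ?thesis
    by (intro integrableI_nonneg) (auto simp: f_def intro: le_less_trans)
qed

lemma power_series_in_bargmann:
  fixes a :: "nat \<Rightarrow> complex"
  assumes "summable (\<lambda>k. (cmod (a k))\<^sup>2 * fact k)"
  shows "(\<lambda>z. \<Sum>k. a k * z ^ k) \<in> bargmann"
proof -
  have "(\<lambda>z. \<Sum>k. a k * z ^ k) holomorphic_on UNIV"
    unfolding holomorphic_on_open[OF open_UNIV]
    using termdiffs_strong_converges_everywhere[OF summable_power_series_if_summable_norm_sq_fact[OF assms]]
    by blast
  moreover have "integrable lborel (\<lambda>z. (cmod (\<Sum>k. a k * z ^ k))\<^sup>2 * exp (- (cmod z)\<^sup>2))"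
    unfolding distr_lborel_pair_Complex[symmetric]
    using integrable_norm_power_series_sq_gauss[OF assms]
    by (subst integrable_distr_eq) (auto intro!: borel_measurable_pair_lborel_continuous continuous_intros)
  ultimately show ?thesis
    by (simp add: bargmann_def)
qed

section \<open>The kernel as a power series\<close>

definition tail_density :: "nat \<Rightarrow> real \<Rightarrow> real" where
  "tail_density n s = s ^ (n - 1) * exp (- s\<^sup>2 / 2) / sqrt (fact n)"

definition tail_integral :: "nat \<Rightarrow> real \<Rightarrow> real" where
  "tail_integral n t = (LBINT s:{t..}. tail_density n s)"

lemma integrable_tail_density: "integrable lborel (tail_density n)"
proof -
  have "tail_density n = (\<lambda>s. sqrt (2 * pi) / sqrt (fact n) * (std_normal_density s * s ^ (n - 1)))"
    by (auto simp: fun_eq_iff tail_density_def std_normal_density_def)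
  then show ?thesis
    by (simp add: integrable_std_normal_moment)
qed

lemma continuous_on_tail_density: "continuous_on UNIV (tail_density n)"
  unfolding tail_density_def by (intro continuous_intros) auto

lemma set_integrable_tail_density: "A \<in> sets borel \<Longrightarrow> set_integrable lborel A (tail_density n)"
  unfolding set_integrable_def using integrable_tail_density by (intro integrable_mult_indicator) auto

lemma tail_integral_eq_interval_integral:
  "tail_integral n t = tail_integral n 0 - (LBINT s=0..t. tail_density n s)"
proof -
  have to_infinity: "tail_integral n t = (LBINT s=ereal t..\<infinity>. tail_density n s)" for t
    unfolding tail_integral_def interval_integral_to_infinity_eq
    by (rule set_integral_discrete_difference[where X = "{t}"]) auto
  have "(LBINT s=ereal 0..ereal t. tail_density n s) + (LBINT s=ereal t..\<infinity>. tail_density n s)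
      = (LBINT s=ereal 0..\<infinity>. tail_density n s)"
    by (intro interval_integral_sum) (auto simp: interval_lebesgue_integrable_def intro: set_integrable_tail_density)
  then show ?thesis
    unfolding to_infinity by (simp add: zero_ereal_def)
qed

lemma tail_integral_has_real_derivative:
  "(tail_integral n has_real_derivative - tail_density n t) (at t)"
proof -
  have "((\<lambda>u. LBINT s=ereal 0..u. tail_density n s) has_vector_derivative tail_density n t)
      (at t within {- (\<bar>t\<bar> + 1)..\<bar>t\<bar> + 1})"
    by (rule interval_integral_FTC2) (auto intro: continuous_on_subset[OF continuous_on_tail_density])
  moreover have "at t within {- (\<bar>t\<bar> + 1)..\<bar>t\<bar> + 1} = at t"
    by (rule at_within_Icc_at) auto
  ultimately have "((\<lambda>u. LBINT s=0..u. tail_density n s) has_real_derivative tail_density n t) (at t)"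
    by (simp add: has_real_derivative_iff_has_vector_derivative zero_ereal_def)
  from DERIV_diff[OF DERIV_const[of "tail_integral n 0"] this]
  have "((\<lambda>t. tail_integral n 0 - (LBINT s=0..t. tail_density n s)) has_real_derivative - tail_density n t) (at t)"
    by simp
  then show ?thesis
    unfolding tail_integral_eq_interval_integral[symmetric] .
qed

lemma inner_integral_eq_tail_integral:
  assumes "1 \<le> n"
  shows "(LBINT s:{t..}. inverse s * exp (- s\<^sup>2 / 2) * u n s) = tail_integral n t"
  unfolding tail_integral_def
proof (rule set_lebesgue_integral_cong_AE)
  show "AE s\<in>{t..} in lborel. inverse s * exp (- s\<^sup>2 / 2) * u n s = tail_density n s"
    using AE_lborel_singleton[of 0]
  proof (rule AE_mp, intro AE_I2 impI)
    fix s :: real assume "s \<noteq> 0"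
    moreover have "s ^ n = s * s ^ (n - 1)" using assms by (cases n) auto
    ultimately show "inverse s * exp (- s\<^sup>2 / 2) * u n s = tail_density n s"
      by (simp add: u_def tail_density_def field_simps)
  qed
  show "(\<lambda>s. inverse s * exp (- s\<^sup>2 / 2) * u n s) \<in> borel_measurable lborel"
    unfolding u_def by measurable
qed (use integrable_tail_density in auto)

lemma bounded_if_eventually_two_step_decreasing:
  fixes f :: "nat \<Rightarrow> 'a::linorder"
  assumes "\<And>k. m \<le> k \<Longrightarrow> f (k + 2) \<le> f k"
  shows "f k \<le> Max (f ` {..m + 1})"
proof (induction k rule: less_induct)
  case (less k)
  show ?case
  proof (cases "k \<le> m + 1")
    case False
    define j where "j = k - 2"
    have k: "k = j + 2" "m \<le> j" using False by (auto simp: j_def)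
    then have "f k \<le> f j" using assms by simp
    also have "\<dots> \<le> Max (f ` {..m + 1})" using less.IH[of j] k by simp
    finally show ?thesis .
  qed simp
qed

text \<open>Taylor coefficients of exp(t^2/2) * tail_integral n t, read off from the equation
  H' = t H - t^(n-1) / sqrt(n!) that this function satisfies.\<close>

fun h_coeff :: "nat \<Rightarrow> nat \<Rightarrow> real" where
  "h_coeff n 0 = tail_integral n 0"
| "h_coeff n (Suc 0) = - (if n - 1 = 0 then 1 / sqrt (fact n) else 0)"
| "h_coeff n (Suc (Suc k)) = (h_coeff n k - (if Suc k = n - 1 then 1 / sqrt (fact n) else 0)) / (real k + 2)"

lemma h_coeff_Suc_Suc_eq: "n - 1 \<le> k \<Longrightarrow> h_coeff n (k + 2) = h_coeff n k / (real k + 2)"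
  by simp

definition h_weight :: "nat \<Rightarrow> nat \<Rightarrow> real" where
  "h_weight n k = (h_coeff n k)\<^sup>2 * fact k / (real k + 1)"

lemma h_weight_nonneg: "0 \<le> h_weight n k"
  by (simp add: h_weight_def)

text \<open>(h_weight n k)^2 (k + 1)^3 does not increase in steps of two, so h_weight n k = O(k^(-3/2)).\<close>

lemma h_weight_step:
  assumes "n - 1 \<le> k"
  shows "(h_weight n (k + 2))\<^sup>2 * (real (k + 2) + 1) ^ 3 \<le> (h_weight n k)\<^sup>2 * (real k + 1) ^ 3"
proof -
  define K where "K = real k"
  define q where "q = (K + 1)\<^sup>2 / ((K + 2) * (K + 3))"
  have pos: "0 < K + 1" "0 < K + 2" "0 < K + 3" by (simp_all add: K_def)
  then have nz: "K + 1 \<noteq> 0" "K + 2 \<noteq> 0" "K + 3 \<noteq> 0" by simp_all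
  have h: "h_coeff n (k + 2) = h_coeff n k / (K + 2)"
    using h_coeff_Suc_Suc_eq[OF assms] by (simp add: K_def)
  have "fact (k + 2) = (K + 2) * (K + 1) * fact k" by (simp add: K_def algebra_simps)
  then have "h_weight n (k + 2) = (h_coeff n k / (K + 2))\<^sup>2 * ((K + 2) * (K + 1) * fact k) / (K + 3)"
    unfolding h_weight_def h by (simp add: K_def ac_simps)
  also have "\<dots> = h_weight n k * q"
    unfolding h_weight_def q_def K_def[symmetric] by (simp add: nz divide_simps power2_eq_square)
  finally have weight: "h_weight n (k + 2) = h_weight n k * q" .
  have "q\<^sup>2 * (K + 3) ^ 3 = (K + 1) ^ 3 * ((K + 1) * (K + 3) / (K + 2)\<^sup>2)"
    by (simp add: q_def nz divide_simps power2_eq_square power3_eq_cube)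
  also have "\<dots> \<le> (K + 1) ^ 3"
  proof (intro mult_left_le)
    have "(K + 1) * (K + 3) \<le> (K + 2)\<^sup>2" by (simp add: power2_eq_square algebra_simps)
    then show "(K + 1) * (K + 3) / (K + 2)\<^sup>2 \<le> 1" using nz by (simp add: divide_le_eq_1)
  qed (use pos in auto)
  finally have "q\<^sup>2 * (K + 3) ^ 3 \<le> (K + 1) ^ 3" .
  then have "(h_weight n k)\<^sup>2 * (q\<^sup>2 * (K + 3) ^ 3) \<le> (h_weight n k)\<^sup>2 * (K + 1) ^ 3"
    by (rule mult_left_mono) simp
  moreover have "real (k + 2) + 1 = K + 3" by (simp add: K_def)
  ultimately show ?thesis
    unfolding weight K_def by (simp add: power_mult_distrib mult_ac add.commute)
qed

lemma summable_inverse_sqrt_cube: "summable (\<lambda>k. sqrt (1 / (real k + 1) ^ 3))"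
proof -
  have "summable (\<lambda>k. real (Suc k) powr (- 3 / 2))"
    using summable_Suc_iff[of "\<lambda>k. real k powr (- 3 / 2)"] by (simp add: summable_real_powr_iff)
  moreover have "real (Suc k) powr (- 3 / 2) = sqrt (1 / (real k + 1) ^ 3)" for k
  proof -
    have "real (Suc k) powr (- 3 / 2) = (real (Suc k) powr (- 3)) powr (1 / 2)"
      by (simp add: powr_powr)
    also have "\<dots> = sqrt (1 / (real k + 1) ^ 3)"
      by (simp add: powr_half_sqrt powr_minus_divide powr_realpow add.commute)
    finally show ?thesis .
  qed
  ultimately show ?thesis by simp
qed

lemma summable_h_weight: "summable (h_weight n)"
proof (rule summable_comparison_test')
  define M where "M = Max ((\<lambda>k. (h_weight n k)\<^sup>2 * (real k + 1) ^ 3) ` {..n - 1 + 1})"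
  show "summable (\<lambda>k. sqrt M * sqrt (1 / (real k + 1) ^ 3))"
    by (intro summable_mult summable_inverse_sqrt_cube)
  show "norm (h_weight n k) \<le> sqrt M * sqrt (1 / (real k + 1) ^ 3)" for k
  proof -
    have "(h_weight n k)\<^sup>2 * (real k + 1) ^ 3 \<le> M"
      unfolding M_def
      by (rule bounded_if_eventually_two_step_decreasing[where f = "\<lambda>k. (h_weight n k)\<^sup>2 * (real k + 1) ^ 3"])
         (rule h_weight_step)
    then have "h_weight n k \<le> sqrt (M / (real k + 1) ^ 3)"
      by (intro real_le_rsqrt) (simp add: field_simps)
    also have "\<dots> = sqrt M * sqrt (1 / (real k + 1) ^ 3)"
      by (simp add: real_sqrt_divide)
    finally show ?thesis using h_weight_nonneg by simp
  qed
qed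

definition p_coeff :: "nat \<Rightarrow> nat \<Rightarrow> real" where
  "p_coeff n k = (case k of 0 \<Rightarrow> 0 | Suc j \<Rightarrow> h_coeff n j / real (Suc j))"

definition h_series :: "nat \<Rightarrow> real \<Rightarrow> real" where
  "h_series n t = (\<Sum>k. h_coeff n k * t ^ k)"

definition p_series :: "nat \<Rightarrow> real \<Rightarrow> real" where
  "p_series n t = (\<Sum>k. p_coeff n k * t ^ k)"

lemma diffs_p_coeff: "diffs (p_coeff n) = h_coeff n"
  by (auto simp: fun_eq_iff diffs_def p_coeff_def simp del: of_nat_Suc)

lemma summable_p_coeff_sq_fact: "summable (\<lambda>k. (p_coeff n k)\<^sup>2 * fact k)"
proof -
  have "(p_coeff n (Suc j))\<^sup>2 * fact (Suc j) = h_weight n j" for j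
    by (simp add: p_coeff_def h_weight_def power_divide field_simps power2_eq_square del: of_nat_Suc)
  then show ?thesis
    using summable_h_weight[of n] summable_Suc_iff[of "\<lambda>k. (p_coeff n k)\<^sup>2 * fact k"] by simp
qed

lemma summable_p_series: "summable (\<lambda>k. p_coeff n k * t ^ k)"
  using summable_p_coeff_sq_fact[of n]
  by (intro summable_power_series_if_summable_norm_sq_fact) simp

lemma summable_h_series: "summable (\<lambda>k. h_coeff n k * t ^ k)"
  using termdiff_converges_all[of "p_coeff n" t] summable_p_series by (simp add: diffs_p_coeff)

lemma p_series_has_real_derivative: "(p_series n has_real_derivative h_series n t) (at t)"
  using termdiffs_strong_converges_everywhere[OF summable_p_series, of n t]
  unfolding p_series_def h_series_def diffs_p_coeff .

lemma diffs_h_coeff: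
  "diffs (h_coeff n) k = (case k of 0 \<Rightarrow> 0 | Suc j \<Rightarrow> h_coeff n j) - (if k = n - 1 then 1 / sqrt (fact n) else 0)"
proof (cases k)
  case (Suc j)
  have "(2 + real j) * x / (real j + 2) = x" for x
    by (simp add: add.commute)
  then show ?thesis
    using Suc unfolding diffs_def h_coeff.simps by simp
qed (simp add: diffs_def)

lemma h_series_has_real_derivative:
  "(h_series n has_real_derivative t * h_series n t - t ^ (n - 1) / sqrt (fact n)) (at t)"
proof -
  have "(\<lambda>j. t * (h_coeff n j * t ^ j)) sums (t * h_series n t)"
    unfolding h_series_def by (intro sums_mult summable_sums summable_h_series)
  then have "(\<lambda>j. (\<lambda>k. (case k of 0 \<Rightarrow> 0 | Suc j \<Rightarrow> h_coeff n j) * t ^ k) (Suc j)) sums (t * h_series n t)"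
    by (simp add: mult_ac)
  then have shifted: "(\<lambda>k. (case k of 0 \<Rightarrow> 0 | Suc j \<Rightarrow> h_coeff n j) * t ^ k) sums (t * h_series n t)"
    by (subst (asm) sums_Suc_iff) simp
  have "(\<lambda>k. (if k = n - 1 then 1 / sqrt (fact n) else 0) * t ^ k)
      = (\<lambda>k. if k = n - 1 then t ^ (n - 1) / sqrt (fact n) else 0)"
    by auto
  then have single: "(\<lambda>k. (if k = n - 1 then 1 / sqrt (fact n) else 0) * t ^ k) sums (t ^ (n - 1) / sqrt (fact n))"
    using sums_single[of "n - 1" "\<lambda>_. t ^ (n - 1) / sqrt (fact n)"] by simp
  from sums_diff[OF shifted single]
  have "(\<lambda>k. diffs (h_coeff n) k * t ^ k) sums (t * h_series n t - t ^ (n - 1) / sqrt (fact n))"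
    unfolding diffs_h_coeff left_diff_distrib .
  with termdiffs_strong_converges_everywhere[OF summable_h_series, of n t] show ?thesis
    unfolding h_series_def by (simp add: sums_iff)
qed

lemma h_series_eq: "h_series n t = exp (t\<^sup>2 / 2) * tail_integral n t"
proof -
  define D where "D t = h_series n t * exp (- t\<^sup>2 / 2) - tail_integral n t" for t
  have "(D has_real_derivative 0) (at x)" for x
  proof -
    have "((\<lambda>x. exp (- x\<^sup>2 / 2)) has_real_derivative exp (- x\<^sup>2 / 2) * (- x)) (at x)"
      by (auto intro!: derivative_eq_intros)
    from DERIV_diff[OF DERIV_mult[OF h_series_has_real_derivative[of n x] this]
        tail_integral_has_real_derivative[of n x]]
    show ?thesis
      unfolding D_def[abs_def] by (simp add: tail_density_def algebra_simps)
  qed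
  then have "D t = D 0" by (intro DERIV_isconst_all) auto
  also have "D 0 = 0"
    using powser_zero[of "h_coeff n"] by (simp add: D_def h_series_def)
  finally show ?thesis
    by (simp add: D_def exp_minus field_simps)
qed

lemma K0_eq_p_series:
  assumes "1 \<le> n"
  shows "K0 lam (u n) y = p_series n y / lam"
proof -
  have "(LBINT t=0..y. exp (t\<^sup>2 / 2) * (LBINT s:{t..}. inverse s * exp (- s\<^sup>2 / 2) * u n s))
      = (LBINT t=0..y. h_series n t)"
    by (simp only: inner_integral_eq_tail_integral[OF assms] h_series_eq)
  also have "\<dots> = p_series n y - p_series n 0"
  proof (unfold zero_ereal_def, rule interval_integral_FTC_finite)
    show "continuous_on {min 0 y..max 0 y} (h_series n)"
      by (intro continuous_at_imp_continuous_on ballI DERIV_isCont[OF h_series_has_real_derivative])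
    show "(p_series n has_vector_derivative h_series n x) (at x within {min 0 y..max 0 y})" for x
      using p_series_has_real_derivative
      by (auto simp: has_real_derivative_iff_has_vector_derivative intro: has_vector_derivative_at_within)
  qed
  also have "p_series n 0 = 0"
    using powser_zero[of "p_coeff n"] by (simp add: p_series_def p_coeff_def)
  finally show ?thesis
    by (simp add: K0_def)
qed

definition bargmann_coeff :: "nat \<Rightarrow> real \<Rightarrow> nat \<Rightarrow> complex" where
  "bargmann_coeff n lam k = of_real (p_coeff n k / lam) * \<i> ^ k"

lemma summable_bargmann_coeff: "summable (\<lambda>k. (cmod (bargmann_coeff n lam k))\<^sup>2 * fact k)"
proof -
  have "(cmod (bargmann_coeff n lam k))\<^sup>2 * fact k = (p_coeff n k)\<^sup>2 * fact k / lam\<^sup>2" for k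
    by (simp add: bargmann_coeff_def norm_mult norm_divide norm_power power_divide)
  then show ?thesis
    using summable_divide[OF summable_p_coeff_sq_fact, of n "lam\<^sup>2"] by simp
qed

lemma bargmann_series_neg_imaginary_axis:
  "(\<Sum>k. bargmann_coeff n lam k * (- \<i> * of_real y) ^ k) = of_real (p_series n y / lam)"
proof -
  have series_term: "bargmann_coeff n lam k * (- \<i> * of_real y) ^ k = of_real (p_coeff n k * y ^ k / lam)" for k
  proof -
    have "\<i> ^ k * (- \<i> * of_real y) ^ k = of_real (y ^ k)"
      by (simp flip: power_mult_distrib)
    then show ?thesis
      by (simp add: bargmann_coeff_def mult.assoc)
  qed
  have "(\<lambda>k. p_coeff n k * y ^ k / lam) sums (p_series n y / lam)"
    unfolding p_series_def by (intro sums_divide summable_sums summable_p_series)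
  then have "(\<lambda>k. complex_of_real (p_coeff n k * y ^ k / lam)) sums of_real (p_series n y / lam)"
    by (subst sums_of_real_iff)
  then show ?thesis
    unfolding series_term[symmetric] by (rule sums_unique[symmetric])
qed

theorem mainTheorem7:
  fixes lam :: real and n :: nat
  assumes "lam \<noteq> 0" and "n \<ge> 1"
  shows "\<exists>\<phi>\<in>bargmann0. \<forall>y::real. y \<ge> 0 \<longrightarrow>
           \<phi> (- \<i> * complex_of_real y) = complex_of_real (K0 lam (u n) y)"
proof
  define \<phi> where "\<phi> z = (\<Sum>k. bargmann_coeff n lam k * z ^ k)" for z
  have "\<phi> \<in> bargmann"
    unfolding \<phi>_def[abs_def] by (rule power_series_in_bargmann[OF summable_bargmann_coeff])
  moreover have "\<phi> 0 = 0"
    using powser_zero[of "bargmann_coeff n lam"] by (simp add: \<phi>_def bargmann_coeff_def p_coeff_def)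
  ultimately show "\<phi> \<in> bargmann0"
    by (simp add: bargmann0_def)
  show "\<forall>y::real. y \<ge> 0 \<longrightarrow> \<phi> (- \<i> * complex_of_real y) = complex_of_real (K0 lam (u n) y)"
    using bargmann_series_neg_imaginary_axis K0_eq_p_series[OF assms(2)] by (simp add: \<phi>_def)
qed

end
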